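(* For all $f,g\in\mathcal B_1(2^\omega)$, $f\le_{\mathbf{tt1}} g$ if and only if $|f|_\alpha\le|g|_\alpha$.
   Context: $\mathcal B_1(2^\omega)$: functions $2^\omega\to\mathbb R$ that are pointwise limits of sequences of continuous functions. Optimal derivation sequence: for $\mathcal C\subseteq\mathcal P(X)$, $X$ a compact metric space, define $P^0=X$, $P^{\nu+1}=P^\nu\setminus\bigcup\{U\subseteq X \text{ open}: P^\nu\cap U\subseteq C\text{ for some }C\in\mathcal C\}$, and $P^\lambda=\bigcap_{\nu<\lambda}P^\nu$ for limit $\lambda$. Bourgain rank: for $f\in\mathcal B_1(2^\omega)$, $p\in\mathbb Q$, $\varepsilon\in\mathbb Q^+$, let $P^\nu_{f,p,\varepsilon}$ be the optimal derivation sequence for $\{f^{-1}((-\infty,p+\varepsilon)),f^{-1}((p-\varepsilon,\infty))\}$, let $\alpha(f,p,\varepsilon)$ be the least $\nu$ with $P^\nu_{f,p,\varepsilon}=\emptyset$, and $|f|_\alpha=\sup_{p,\varepsilon}\alpha(f,p,\varepsilon)$. Questions: for $y\in\mathbb R$, $p\in\mathbb Q$, $\varepsilon\in\mathbb Q^+$, a bit $b\in\{0,1\}$ is a correct answer to "$y\lesssim_\varepsilon p$" if either $b=1$ and $y<p+\varepsilon$, or $b=0$ and $y>p-\varepsilon$. $f\le_{\mathbf{tt1}} g$ means: for every $p\in\mathbb Q,\varepsilon\in\mathbb Q^+$ there are a continuous $k:2^\omega\to2^\omega$, $q\in\mathbb Q$, $\delta\in\mathbb Q^+$, $r\in\omega$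 and $h:2^{r+1}\to\{0,1\}$ such that for every $A\in2^\omega$, if $b$ is a correct answer to $g(k(A))\lesssim_\delta q$ then $h(A\upharpoonright r,b)$ is a correct answer to $f(A)\lesssim_\varepsilon p$. *)

theory Defs
  imports "HOL-Analysis.Analysis"
begin

text \<open>All ranks involved are countable ordinals. We index transfinite sequences by an
uncountable well-order (a well-ordering of the reals), which contains (an initial segment
isomorphic to) all countable ordinals.\<close>

definition wo_real :: "real rel" where
  "wo_real = (SOME r. well_order_on UNIV r)"

lemma wo_real: "well_order_on UNIV wo_real"
  unfolding wo_real_def by (rule someI_ex) (rule well_order_on)

typedef cord = "UNIV :: real set" by simp

instantiation cord :: linorder
begin
definition less_eq_cord :: "cord \<Rightarrow> cord \<Rightarrow> bool" where
  "less_eq_cord x y \<longleftrightarrow> (Rep_cord x, Rep_cord y) \<in> wo_real"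
definition less_cord :: "cord \<Rightarrow> cord \<Rightarrow> bool" where
  "less_cord x y \<longleftrightarrow> x \<le> y \<and> x \<noteq> y"
instance
proof
  have W: "well_order_on UNIV wo_real" by (rule wo_real)
  then have refl: "refl_on UNIV wo_real" and tr: "trans wo_real"
    and an: "antisym wo_real" and tot: "total_on UNIV wo_real"
    unfolding well_order_on_def linear_order_on_def partial_order_on_def preorder_on_def
    by auto
  fix x y z :: cord
  show "(x < y) = (x \<le> y \<and> \<not> y \<le> x)"
    using an Rep_cord_inject unfolding less_cord_def less_eq_cord_def antisym_def by blast
  show "x \<le> x" using refl unfolding less_eq_cord_def refl_on_def by auto
  show "x \<le> y \<Longrightarrow> y \<le> z \<Longrightarrow> x \<le> z"
    using tr unfolding less_eq_cord_def trans_def by blast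
  show "x \<le> y \<Longrightarrow> y \<le> x \<Longrightarrow> x = y"
    using an Rep_cord_inject unfolding less_eq_cord_def antisym_def by blast
  show "x \<le> y \<or> y \<le> x"
    using tot refl Rep_cord_inject unfolding less_eq_cord_def total_on_def refl_on_def
    by (cases "Rep_cord x = Rep_cord y") auto
qed
end

instance cord :: wellorder
proof
  fix P :: "cord \<Rightarrow> bool" and a :: cord
  assume step: "\<And>x. (\<And>y. y < x \<Longrightarrow> P y) \<Longrightarrow> P x"
  have wf: "wf (wo_real - Id)" using wo_real unfolding well_order_on_def by auto
  have "\<forall>x. Rep_cord x = r \<longrightarrow> P x" for r
  proof (induct r rule: wf_induct[OF wf])
    case (1 r)
    show ?case
    proof (intro allI impI)
      fix x assume xr: "Rep_cord x = r"
      show "P x"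
      proof (rule step)
        fix y assume "y < x"
        then have "(Rep_cord y, r) \<in> wo_real - Id"
          using xr Rep_cord_inject unfolding less_cord_def less_eq_cord_def by auto
        then show "P y" using 1 by blast
      qed
    qed
  qed
  then show "P a" by blast
qed

text \<open>Cantor space \<open>2^\<omega>\<close> is \<open>nat \<Rightarrow> bool\<close> with the product topology
(bool carries the discrete topology).\<close>

type_synonym cantor = "nat \<Rightarrow> bool"

definition baire1 :: "(cantor \<Rightarrow> real) \<Rightarrow> bool" where
  "baire1 f \<longleftrightarrow> (\<exists>F :: nat \<Rightarrow> cantor \<Rightarrow> real.
      (\<forall>n. continuous_on UNIV (F n)) \<and> (\<forall>x. (\<lambda>n. F n x) \<longlonglongrightarrow> f x))"

definition deriv_step :: "'a::topological_space set set \<Rightarrow> 'a set \<Rightarrow> 'a set" where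
  "deriv_step \<C> P = P - \<Union>{U. open U \<and> (\<exists>C\<in>\<C>. P \<inter> U \<subseteq> C)}"

text \<open>The transfinite sequence \<open>P^\<nu>\<close> (with \<open>X = UNIV\<close>), indexed by a well-ordered type:
\<open>P^0 = X\<close>, \<open>P^{\<nu>+1} = deriv_step (P^\<nu>)\<close>, \<open>P^\<lambda> = \<Inter>_{\<nu><\<lambda>} P^\<nu>\<close>.\<close>
definition opt_deriv :: "'a::topological_space set set \<Rightarrow> 'i::wellorder \<Rightarrow> 'a set" where
  "opt_deriv \<C> = wfrec {(x, y). x < y} (\<lambda>R \<nu>.
     if (\<forall>x. \<nu> \<le> x) then UNIV
     else if (\<exists>\<mu>. \<mu> < \<nu> \<and> \<not> (\<exists>x. \<mu> < x \<and> x < \<nu>))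
       then deriv_step \<C> (R (THE \<mu>. \<mu> < \<nu> \<and> \<not> (\<exists>x. \<mu> < x \<and> x < \<nu>)))
     else \<Inter>{R \<mu> | \<mu>. \<mu> < \<nu>})"

definition alpha_rank :: "(cantor \<Rightarrow> real) \<Rightarrow> rat \<Rightarrow> rat \<Rightarrow> cord" where
  "alpha_rank f p \<epsilon> = (LEAST \<nu>. opt_deriv
      {f -` {..< real_of_rat (p + \<epsilon>)}, f -` {real_of_rat (p - \<epsilon>) <..}} \<nu> = {})"

definition bourgain_rank :: "(cantor \<Rightarrow> real) \<Rightarrow> cord" where
  "bourgain_rank f = (LEAST \<nu>. \<forall>p \<epsilon>. \<epsilon> > 0 \<longrightarrow> alpha_rank f p \<epsilon> \<le> \<nu>)"

text \<open>Bit \<open>1\<close> is \<open>True\<close>, bit \<open>0\<close> is \<open>False\<close>.\<close>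
definition correct_answer :: "real \<Rightarrow> rat \<Rightarrow> rat \<Rightarrow> bool \<Rightarrow> bool" where
  "correct_answer y p \<epsilon> b \<longleftrightarrow>
     (b \<and> y < real_of_rat (p + \<epsilon>)) \<or> (\<not> b \<and> y > real_of_rat (p - \<epsilon>))"

text \<open>\<open>A\<restriction>r\<close> is rendered as the list \<open>[A 0, \<dots>, A (r-1)]\<close>; \<open>h : 2^{r+1} \<rightarrow> 2\<close> as a
function of that list and the extra bit.\<close>
definition tt1_le :: "(cantor \<Rightarrow> real) \<Rightarrow> (cantor \<Rightarrow> real) \<Rightarrow> bool" where
  "tt1_le f g \<longleftrightarrow> (\<forall>p \<epsilon>. \<epsilon> > 0 \<longrightarrow>
     (\<exists>(k :: cantor \<Rightarrow> cantor) (q :: rat) (\<delta> :: rat) (r :: nat) (h :: bool list \<Rightarrow> bool \<Rightarrow> bool).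
        continuous_on UNIV k \<and> \<delta> > 0 \<and>
        (\<forall>A b. correct_answer (g (k A)) q \<delta> b \<longrightarrow>
               correct_answer (f A) p \<epsilon> (h (map A [0..<r]) b))))"

end

theory Submission
  imports Defs
begin

text \<open>
  If \<open>f \<le>\<^sub>t\<^sub>t\<^sub>1 g\<close> via \<open>(k, h)\<close>, then \<open>h\<close> reads only a finite prefix and is therefore
  locally constant, so every point removed at stage \<open>\<nu>\<close> of the derivation for the question about
  \<open>g\<close> pulls back under \<open>k\<close> to a point removed at stage \<open>\<nu>\<close> for the question about \<open>f\<close>; hence each
  \<open>\<alpha>(f,p,\<epsilon>)\<close> is bounded by some \<open>\<alpha>(g,q,\<delta>)\<close>.

  Conversely, if \<open>P\<^sup>\<alpha>\<close> is empty for the question about \<open>f\<close>, compactness yields a single stage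
  \<open>\<mu> < \<alpha>\<close> and prefix length \<open>r\<close> such that \<open>P\<^sup>\<mu>\<close> is decided on every cylinder of length \<open>r\<close>.
  As \<open>\<mu> < |f| \<le> |g|\<close>, some question about \<open>g\<close> has a point \<open>y\<close> surviving to stage \<open>\<mu>\<close>; after
  shrinking that question, one of its answers is wrong at \<open>y\<close>. By induction on \<open>\<mu>\<close> one builds a
  continuous reduction on each cylinder: the points surviving to stage \<open>\<mu>\<close> are sent to \<open>y\<close>, and
  the clopen pieces removed earlier are mapped, by the induction hypothesis, close to \<open>y\<close> into
  points of the earlier derivatives for \<open>g\<close>.

  All ranks are countable ordinals: by the Baire category theorem a Baire class one function
  makes every nonempty closed set lose a relatively open piece at the next stage, and distinct
  stages lose distinct basic cylinders.
\<close>

section \<open>Derivation sequences\<close>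

lemma opt_deriv_cut_eq:
  fixes \<nu> :: "'i::wellorder"
  shows "opt_deriv \<C> \<nu> =
     (if \<forall>x. \<nu> \<le> x then UNIV
      else if \<exists>\<mu>. \<mu> < \<nu> \<and> \<not> (\<exists>x. \<mu> < x \<and> x < \<nu>)
        then deriv_step \<C> (cut (opt_deriv \<C>) {(x, y). x < y} \<nu>
               (THE \<mu>. \<mu> < \<nu> \<and> \<not> (\<exists>x. \<mu> < x \<and> x < \<nu>)))
      else \<Inter>{cut (opt_deriv \<C>) {(x, y). x < y} \<nu> \<mu> | \<mu>. \<mu> < \<nu>})"
proof -
  have "wf {(x, y). x < (y::'i)}"
    using wf by (simp add: wf_def)
  then show ?thesis
    unfolding opt_deriv_def by (rule wfrec)
qed

lemma opt_deriv_bot: "\<forall>x. \<nu> \<le> x \<Longrightarrow> opt_deriv \<C> \<nu> = UNIV"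
  by (subst opt_deriv_cut_eq) simp

lemma opt_deriv_succ:
  assumes "\<mu> < \<nu>" "\<not> (\<exists>x. \<mu> < x \<and> x < \<nu>)"
  shows "opt_deriv \<C> \<nu> = deriv_step \<C> (opt_deriv \<C> \<mu>)"
proof -
  have "(THE \<mu>. \<mu> < \<nu> \<and> \<not> (\<exists>x. \<mu> < x \<and> x < \<nu>)) = \<mu>"
    using assms by (intro the_equality) (auto, metis linorder_neqE)
  moreover have "\<not> (\<forall>x. \<nu> \<le> x)"
    using assms(1) by (meson leD)
  ultimately show ?thesis
    using assms by (subst opt_deriv_cut_eq) (auto simp: cut_apply)
qed

lemma opt_deriv_limit:
  assumes "\<not> (\<forall>x. \<nu> \<le> x)" "\<not> (\<exists>\<mu>. \<mu> < \<nu> \<and> \<not> (\<exists>x. \<mu> < x \<and> x < \<nu>))"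
  shows "opt_deriv \<C> \<nu> = \<Inter>{opt_deriv \<C> \<mu> | \<mu>. \<mu> < \<nu>}"
  using assms by (subst opt_deriv_cut_eq) (auto simp: cut_apply)

definition removable :: "'a::topological_space set set \<Rightarrow> 'a set \<Rightarrow> 'a \<Rightarrow> bool" where
  "removable \<C> P x \<longleftrightarrow> (\<exists>U. open U \<and> x \<in> U \<and> (\<exists>C\<in>\<C>. P \<inter> U \<subseteq> C))"

lemma removableI: "open U \<Longrightarrow> x \<in> U \<Longrightarrow> C \<in> \<C> \<Longrightarrow> P \<inter> U \<subseteq> C \<Longrightarrow> removable \<C> P x"
  unfolding removable_def by blast

lemma deriv_step_eq: "deriv_step \<C> P = {x \<in> P. \<not> removable \<C> P x}"
  unfolding deriv_step_def removable_def by blast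

lemma not_in_opt_deriv_iff:
  "x \<notin> opt_deriv \<C> \<nu> \<longleftrightarrow> (\<exists>\<mu><\<nu>. removable \<C> (opt_deriv \<C> \<mu>) x)"
proof (induction \<nu> rule: less_induct)
  case (less \<nu>)
  consider (bot) "\<forall>x. \<nu> \<le> x"
    | (succ) \<pi> where "\<pi> < \<nu>" "\<not> (\<exists>x. \<pi> < x \<and> x < \<nu>)"
    | (limit) "\<not> (\<forall>x. \<nu> \<le> x)" "\<not> (\<exists>\<pi>. \<pi> < \<nu> \<and> \<not> (\<exists>x. \<pi> < x \<and> x < \<nu>))"
    by blast
  then show ?case
  proof cases
    case bot
    then show ?thesis by (auto simp: opt_deriv_bot dest: leD)
  next
    case succ
    then have "\<mu> < \<nu> \<longleftrightarrow> \<mu> < \<pi> \<or> \<mu> = \<pi>" for \<mu>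
      by (metis less_trans linorder_neqE)
    then show ?thesis
      using less.IH[OF succ(1)] by (auto simp: opt_deriv_succ[OF succ] deriv_step_eq)
  next
    case limit
    have "x \<notin> opt_deriv \<C> \<nu> \<longleftrightarrow> (\<exists>\<mu><\<nu>. x \<notin> opt_deriv \<C> \<mu>)"
      by (auto simp: opt_deriv_limit[OF limit])
    also have "\<dots> \<longleftrightarrow> (\<exists>\<mu><\<nu>. \<exists>\<mu>'<\<mu>. removable \<C> (opt_deriv \<C> \<mu>') x)"
      using less.IH by blast
    also have "\<dots> \<longleftrightarrow> (\<exists>\<mu>'<\<nu>. removable \<C> (opt_deriv \<C> \<mu>') x)"
      using limit(2) by (meson less_trans)
    finally show ?thesis .
  qed
qed

lemma opt_deriv_antimono:
  assumes "\<mu> \<le> \<nu>"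
  shows "opt_deriv \<C> \<nu> \<subseteq> opt_deriv \<C> \<mu>"
proof -
  have "\<exists>\<mu>'<\<nu>. removable \<C> (opt_deriv \<C> \<mu>') x" if "x \<notin> opt_deriv \<C> \<mu>" for x
    using that[unfolded not_in_opt_deriv_iff] assms by (meson less_le_trans)
  then show ?thesis
    unfolding not_in_opt_deriv_iff[symmetric] by blast
qed

lemma closed_opt_deriv: "closed (opt_deriv \<C> \<nu>)"
  unfolding closed_def
proof (subst open_subopen, intro ballI)
  fix x assume "x \<in> - opt_deriv \<C> \<nu>"
  then obtain \<mu> U C where "\<mu> < \<nu>" "open U" "x \<in> U" "C \<in> \<C>" "opt_deriv \<C> \<mu> \<inter> U \<subseteq> C"
    by (auto simp: not_in_opt_deriv_iff removable_def)
  moreover from this have "U \<subseteq> - opt_deriv \<C> \<nu>"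
    using not_in_opt_deriv_iff[of _ \<C> \<nu>] unfolding removable_def by blast
  ultimately show "\<exists>T. open T \<and> x \<in> T \<and> T \<subseteq> - opt_deriv \<C> \<nu>"
    by blast
qed

lemma opt_deriv_later_disjoint:
  assumes "open U" "C \<in> \<C>" "opt_deriv \<C> \<nu> \<inter> U \<subseteq> C" "\<nu> < \<nu>'"
  shows "opt_deriv \<C> \<nu>' \<inter> U = {}"
proof -
  have "x \<notin> opt_deriv \<C> \<nu>'" if "x \<in> U" for x
    using removableI[OF assms(1) that assms(2,3)] assms(4) not_in_opt_deriv_iff by blast
  then show ?thesis
    by blast
qed

lemma opt_deriv_pullback:
  fixes k :: "'a::topological_space \<Rightarrow> 'b::topological_space"
    and F :: "'c \<Rightarrow> 'a set" and G :: "'d \<Rightarrow> 'b set" and h :: "'a \<Rightarrow> 'd \<Rightarrow> 'c"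
  assumes cont: "continuous_on UNIV k"
    and locally_const: "\<And>x. \<exists>U. open U \<and> x \<in> U \<and> (\<forall>y\<in>U. h y = h x)"
    and red: "\<And>x d. k x \<in> G d \<Longrightarrow> x \<in> F (h x d)"
  shows "opt_deriv (range F) \<nu> \<subseteq> k -` opt_deriv (range G) \<nu>"
proof (induction \<nu> rule: less_induct)
  case (less \<nu>)
  show ?case
  proof (rule subsetI, rule ccontr)
    fix x assume x: "x \<in> opt_deriv (range F) \<nu>" and "x \<notin> k -` opt_deriv (range G) \<nu>"
    then obtain \<mu> V d where \<mu>: "\<mu> < \<nu>" and V: "open V" "k x \<in> V"
      and sub: "opt_deriv (range G) \<mu> \<inter> V \<subseteq> G d"
      by (auto simp: not_in_opt_deriv_iff removable_def)
    obtain U where U: "open U" "x \<in> U" "\<forall>y\<in>U. h y = h x"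
      using locally_const by blast
    have "opt_deriv (range F) \<mu> \<inter> (k -` V \<inter> U) \<subseteq> F (h x d)"
      using less.IH[OF \<mu>] sub red U(3) by fastforce
    moreover have "open (k -` V \<inter> U)"
      using cont V(1) U(1) by (simp add: continuous_on_open_vimage open_Int)
    ultimately have "removable (range F) (opt_deriv (range F) \<mu>) x"
      unfolding removable_def using U(2) V(2) by blast
    then show False
      using x \<mu> not_in_opt_deriv_iff by blast
  qed
qed

lemma opt_deriv_refine:
  assumes "\<And>d. G' d \<subseteq> G d"
  shows "opt_deriv (range G) \<nu> \<subseteq> opt_deriv (range G') \<nu>"
proof -
  have "opt_deriv (range G) \<nu> \<subseteq> id -` opt_deriv (range G') \<nu>"
    by (rule opt_deriv_pullback[where h = "\<lambda>_ d. d"]) (use assms in auto)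
  then show ?thesis
    by simp
qed

section \<open>Cantor space\<close>

definition prefix :: "cantor \<Rightarrow> nat \<Rightarrow> bool list" where
  "prefix x n = map x [0..<n]"

lemma length_prefix [simp]: "length (prefix x n) = n"
  by (simp add: prefix_def)

definition cylinder :: "bool list \<Rightarrow> cantor set" where
  "cylinder \<sigma> = {x. prefix x (length \<sigma>) = \<sigma>}"

lemma mem_cylinder_prefix: "y \<in> cylinder (prefix x n) \<longleftrightarrow> prefix y n = prefix x n"
  by (simp add: cylinder_def)

lemma prefix_eq_iff: "prefix y n = prefix x n \<longleftrightarrow> (\<forall>i<n. y i = x i)"
  by (simp add: prefix_def Ball_def)

lemma self_mem_cylinder [simp]: "x \<in> cylinder (prefix x n)"
  by (simp add: cylinder_def)

lemma cylinder_prefix_antimono: "m \<le> n \<Longrightarrow> cylinder (prefix x n) \<subseteq> cylinder (prefix x m)"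
  by (auto simp: mem_cylinder_prefix prefix_eq_iff)

lemma cylinder_prefix_eq: "y \<in> cylinder (prefix x n) \<Longrightarrow> cylinder (prefix y n) = cylinder (prefix x n)"
  by (auto simp: mem_cylinder_prefix)

lemma mem_cylinder_prefix_sym: "y \<in> cylinder (prefix x n) \<longleftrightarrow> x \<in> cylinder (prefix y n)"
  by (auto simp: mem_cylinder_prefix)

lemma mem_cylinder_iff: "x \<in> cylinder \<sigma> \<longleftrightarrow> (\<forall>i<length \<sigma>. x i = \<sigma> ! i)"
proof -
  have "prefix x (length \<sigma>) = \<sigma> \<longleftrightarrow> map x [0..<length \<sigma>] = map ((!) \<sigma>) [0..<length \<sigma>]"
    by (simp only: map_nth prefix_def)
  then show ?thesis
    by (simp add: cylinder_def Ball_def)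
qed

lemma open_cylinder: "open (cylinder \<sigma>)"
proof -
  have "cylinder \<sigma> = {x. \<forall>i\<in>{..<length \<sigma>}. x (id i) \<in> {\<sigma> ! i}}"
    by (auto simp: mem_cylinder_iff)
  also have "open \<dots>"
    by (rule product_topology_basis') (auto intro: open_discrete)
  finally show ?thesis .
qed

lemma cylinder_prefix_subset_open:
  assumes "open U" "x \<in> U"
  shows "\<exists>n. cylinder (prefix x n) \<subseteq> U"
proof -
  have "openin (product_topology (\<lambda>i. euclidean) UNIV) U"
    using assms(1) by (simp add: open_fun_def)
  from product_topology_open_contains_basis[OF this assms(2)]
  obtain X where X: "x \<in> (\<Pi>\<^sub>E i\<in>UNIV. X i)" "finite {i. X i \<noteq> topspace euclidean}"
    "(\<Pi>\<^sub>E i\<in>UNIV. X i) \<subseteq> U"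
    by blast
  obtain n where n: "{i. X i \<noteq> UNIV} \<subseteq> {..<n}"
    using X(2) finite_nat_bounded by fastforce
  have "cylinder (prefix x n) \<subseteq> (\<Pi>\<^sub>E i\<in>UNIV. X i)"
  proof
    fix y assume "y \<in> cylinder (prefix x n)"
    then have "y i \<in> X i" for i
    proof (cases "i < n")
      case False
      then show ?thesis using n by auto
    qed (use X(1) in \<open>auto simp: mem_cylinder_prefix prefix_eq_iff\<close>)
    then show "y \<in> (\<Pi>\<^sub>E i\<in>UNIV. X i)"
      by auto
  qed
  with X(3) show ?thesis
    by blast
qed

lemma removable_cantor_iff:
  fixes \<C> :: "cantor set set"
  shows "removable \<C> P x \<longleftrightarrow> (\<exists>n. \<exists>C\<in>\<C>. P \<inter> cylinder (prefix x n) \<subseteq> C)"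
proof
  assume "removable \<C> P x"
  then obtain U C where "open U" "x \<in> U" "C \<in> \<C>" "P \<inter> U \<subseteq> C"
    unfolding removable_def by blast
  moreover obtain n where "cylinder (prefix x n) \<subseteq> U"
    using cylinder_prefix_subset_open \<open>open U\<close> \<open>x \<in> U\<close> by blast
  ultimately show "\<exists>n. \<exists>C\<in>\<C>. P \<inter> cylinder (prefix x n) \<subseteq> C"
    by blast
next
  assume "\<exists>n. \<exists>C\<in>\<C>. P \<inter> cylinder (prefix x n) \<subseteq> C"
  then show "removable \<C> P x"
    using removableI[OF open_cylinder self_mem_cylinder] by blast
qed

lemma compact_UNIV_cantor: "compact (UNIV :: cantor set)"
proof -
  have "compact_space (euclidean :: bool topology)"
    by (simp add: compact_space_def finite_imp_compact)
  then have "compact_space (product_topology (\<lambda>i::nat. (euclidean :: bool topology)) UNIV)"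
    by (simp add: compact_space_product_topology)
  then have "compact_space (euclidean :: cantor topology)"
    by (simp only: euclidean_product_topology)
  then show ?thesis
    by (simp add: compact_space_def)
qed

lemma Hausdorff_space_cantor: "Hausdorff_space (euclidean :: cantor topology)"
proof -
  have "Hausdorff_space (euclidean :: bool topology)"
    unfolding Hausdorff_space_def
    by (intro allI impI, rule exI[of _ "{_}"], rule exI[of _ "{_}"]) (auto simp: open_discrete)
  then have "Hausdorff_space (product_topology (\<lambda>i::nat. (euclidean :: bool topology)) UNIV)"
    by (simp add: Hausdorff_space_product_topology)
  then show ?thesis
    by (simp only: euclidean_product_topology)
qed

section \<open>Baire class one functions and countability of ranks\<close>

lemma Baire_compact_closed_cover:
  fixes P :: "'a::topological_space set" and E :: "nat \<Rightarrow> 'a set"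
  assumes Hausdorff: "Hausdorff_space (euclidean :: 'a topology)"
    and P: "compact P" "P \<noteq> {}" and E: "\<And>n. closed (E n)" "P = (\<Union>n. E n)"
  shows "\<exists>n U. open U \<and> P \<inter> U \<noteq> {} \<and> P \<inter> U \<subseteq> E n"
proof -
  let ?X = "top_of_set P"
  have compact: "compact_space ?X"
    using P(1) by (simp add: compact_space_subtopology)
  have "Hausdorff_space ?X"
    using Hausdorff by (rule Hausdorff_space_subtopology)
  with compact have "locally_compact_space ?X" "regular_space ?X"
    by (simp_all add: compact_imp_locally_compact_space compact_Hausdorff_imp_regular_space)
  moreover have "closedin ?X (E n)" for n
  proof -
    have "E n \<subseteq> P" using E(2) by blast
    then show ?thesis using E(1) by (rule closed_subset)
  qed
  ultimately have "?X interior_of \<Union>(range E) = {}" if "\<forall>n. ?X interior_of E n = {}"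
    using that by (intro Baire_category_alt) auto
  moreover have "?X interior_of \<Union>(range E) = P"
    using E(2) by (simp add: interior_of_openin)
  ultimately obtain n where "?X interior_of E n \<noteq> {}"
    using P(2) by blast
  then obtain T where "openin ?X T" "T \<noteq> {}" "T \<subseteq> E n"
    unfolding interior_of_def by blast
  then obtain U where "open U" "T = P \<inter> U"
    by (auto simp: openin_open)
  with \<open>T \<noteq> {}\<close> \<open>T \<subseteq> E n\<close> show ?thesis
    by blast
qed

lemma pointwise_limit_small_oscillation:
  fixes f :: "'a::topological_space \<Rightarrow> real" and F :: "nat \<Rightarrow> 'a \<Rightarrow> real"
  assumes Hausdorff: "Hausdorff_space (euclidean :: 'a topology)"
    and cont: "\<And>n. continuous_on UNIV (F n)" and lim: "\<And>x. (\<lambda>n. F n x) \<longlonglongrightarrow> f x"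
    and P: "compact P" "P \<noteq> {}" and "\<eta> > 0"
  shows "\<exists>U c. open U \<and> P \<inter> U \<noteq> {} \<and> (\<forall>x\<in>P \<inter> U. \<bar>f x - c\<bar> < \<eta>)"
proof -
  define E where "E N = {x\<in>P. \<forall>n\<ge>N. \<bar>F n x - F N x\<bar> \<le> \<eta>/3}" for N
  have "closed P"
    using compactin_imp_closedin[OF Hausdorff] P(1) by simp
  have closed_E: "closed (E N)" for N
  proof -
    have "E N = P \<inter> (\<Inter>n\<in>{N..}. {x. \<bar>F n x - F N x\<bar> \<le> \<eta>/3})"
      unfolding E_def by auto
    then show ?thesis
      by (simp only:) (intro closed_Int \<open>closed P\<close> closed_INT ballI closed_Collect_le
          continuous_intros cont[THEN continuous_on_subset] subset_UNIV)
  qed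
  have cover: "P = (\<Union>N. E N)"
  proof (intro equalityI subsetI)
    fix x assume "x \<in> P"
    obtain M where "\<forall>m\<ge>M. \<forall>n\<ge>M. dist (F m x) (F n x) < \<eta>/3"
      using LIMSEQ_imp_Cauchy[OF lim] \<open>\<eta> > 0\<close> unfolding Cauchy_def
      by (meson divide_pos_pos zero_less_numeral)
    then have "x \<in> E M"
      using \<open>x \<in> P\<close> unfolding E_def by (auto simp: dist_real_def less_imp_le)
    then show "x \<in> (\<Union>N. E N)" by blast
  qed (unfold E_def, blast)
  obtain N U where U: "open U" "P \<inter> U \<noteq> {}" "P \<inter> U \<subseteq> E N"
    using Baire_compact_closed_cover[OF Hausdorff P closed_E cover] by blast
  then obtain x0 where x0: "x0 \<in> P \<inter> U" by blast
  define V where "V = U \<inter> F N -` {F N x0 - \<eta>/3 <..< F N x0 + \<eta>/3}"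
  have "open V"
    unfolding V_def by (intro open_Int U(1) open_vimage cont open_greaterThanLessThan)
  moreover have "x0 \<in> P \<inter> V"
    using x0 \<open>\<eta> > 0\<close> unfolding V_def by simp
  moreover have "\<bar>f x - F N x0\<bar> < \<eta>" if x: "x \<in> P \<inter> V" for x
  proof -
    have "\<forall>n\<ge>N. \<bar>F n x - F N x\<bar> \<le> \<eta>/3"
      using x U(3) unfolding V_def E_def by blast
    moreover have "(\<lambda>n. \<bar>F n x - F N x\<bar>) \<longlonglongrightarrow> \<bar>f x - F N x\<bar>"
      by (intro tendsto_intros lim)
    ultimately have "\<bar>f x - F N x\<bar> \<le> \<eta>/3"
      by (intro LIMSEQ_le_const2) auto
    moreover have "F N x0 - \<eta>/3 < F N x" "F N x < F N x0 + \<eta>/3"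
      using x unfolding V_def by auto
    ultimately show ?thesis
      unfolding abs_le_iff abs_less_iff by linarith
  qed
  ultimately show ?thesis
    by (intro exI[of _ V] exI[of _ "F N x0"]) blast
qed

lemma baire1_removable_point:
  assumes "baire1 f" "closed P" "P \<noteq> {}" "lo < hi"
  shows "\<exists>x\<in>P. removable {f -` {..<hi}, f -` {lo<..}} P x"
proof -
  obtain F where cont: "\<And>n. continuous_on UNIV (F n)" and lim: "\<And>x. (\<lambda>n. F n x) \<longlonglongrightarrow> f x"
    using assms(1) unfolding baire1_def by blast
  have "compact P"
    using compact_Int_closed[OF compact_UNIV_cantor assms(2)] by simp
  moreover have "(hi - lo) / 2 > 0"
    using assms(4) by simp
  ultimately obtain U c where U: "open U" "P \<inter> U \<noteq> {}" and osc: "\<forall>x\<in>P \<inter> U. \<bar>f x - c\<bar> < (hi - lo) / 2"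
    using pointwise_limit_small_oscillation[OF Hausdorff_space_cantor cont lim _ assms(3)] by blast
  then obtain x where x: "x \<in> P" "x \<in> U"
    by blast
  have "removable {f -` {..<hi}, f -` {lo<..}} P x"
  proof (cases "c \<le> (lo + hi) / 2")
    case True
    have "P \<inter> U \<subseteq> f -` {..<hi}"
    proof
      fix x assume "x \<in> P \<inter> U"
      then have "\<bar>f x - c\<bar> < (hi - lo) / 2" using osc by blast
      then show "x \<in> f -` {..<hi}" using True unfolding abs_less_iff by simp
    qed
    then show ?thesis
      by (rule removableI[OF U(1) x(2), rotated]) simp
  next
    case False
    have "P \<inter> U \<subseteq> f -` {lo<..}"
    proof
      fix x assume "x \<in> P \<inter> U"
      then have "\<bar>f x - c\<bar> < (hi - lo) / 2" using osc by blast
      then show "x \<in> f -` {lo<..}" using False unfolding abs_less_iff by simp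
    qed
    then show ?thesis
      by (rule removableI[OF U(1) x(2), rotated]) simp
  qed
  with x(1) show ?thesis
    by blast
qed

lemma countable_removable_levels:
  fixes \<C> :: "cantor set set"
  shows "countable {\<nu>::'i::wellorder. \<exists>x\<in>opt_deriv \<C> \<nu>. removable \<C> (opt_deriv \<C> \<nu>) x}"
proof -
  define witness where "witness \<nu> \<sigma> \<longleftrightarrow>
    opt_deriv \<C> \<nu> \<inter> cylinder \<sigma> \<noteq> {} \<and> (\<exists>C\<in>\<C>. opt_deriv \<C> \<nu> \<inter> cylinder \<sigma> \<subseteq> C)"
    for \<nu> :: 'i and \<sigma>
  have "{\<nu>::'i. \<exists>x\<in>opt_deriv \<C> \<nu>. removable \<C> (opt_deriv \<C> \<nu>) x} \<subseteq> (\<Union>\<sigma>. {\<nu>. witness \<nu> \<sigma>})"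
  proof (rule subsetI, unfold mem_Collect_eq)
    fix \<nu> :: 'i assume "\<exists>x\<in>opt_deriv \<C> \<nu>. removable \<C> (opt_deriv \<C> \<nu>) x"
    then obtain x n C where "x \<in> opt_deriv \<C> \<nu>" "C \<in> \<C>" "opt_deriv \<C> \<nu> \<inter> cylinder (prefix x n) \<subseteq> C"
      unfolding removable_cantor_iff by blast
    then have "witness \<nu> (prefix x n)"
      unfolding witness_def using self_mem_cylinder by blast
    then show "\<nu> \<in> (\<Union>\<sigma>. {\<nu>. witness \<nu> \<sigma>})"
      by blast
  qed
  moreover have "{\<nu>. witness \<nu> \<sigma>} \<subseteq> {LEAST \<nu>. witness \<nu> \<sigma>}" for \<sigma>
  proof
    fix \<nu> assume "\<nu> \<in> {\<nu>. witness \<nu> \<sigma>}"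
    then have "witness \<nu> \<sigma>" "witness (LEAST \<nu>. witness \<nu> \<sigma>) \<sigma>" "(LEAST \<nu>. witness \<nu> \<sigma>) \<le> \<nu>"
      by (auto intro: LeastI Least_le)
    moreover have "\<not> witness \<nu>' \<sigma>" if "\<nu>0 < \<nu>'" "witness \<nu>0 \<sigma>" for \<nu>0 \<nu>' :: 'i
      using opt_deriv_later_disjoint[OF open_cylinder _ _ that(1)] that(2) unfolding witness_def by blast
    ultimately show "\<nu> \<in> {LEAST \<nu>. witness \<nu> \<sigma>}"
      by (metis order.not_eq_order_implies_strict singleton_iff)
  qed
  then have "countable {\<nu>. witness \<nu> \<sigma>}" for \<sigma>
    by (rule countable_subset) simp
  then have "countable (\<Union>\<sigma>. {\<nu>. witness \<nu> \<sigma>})"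
    by (simp add: countable_UN)
  ultimately show ?thesis
    by (rule countable_subset)
qed

lemma countable_nonempty_opt_deriv:
  assumes "baire1 f" "lo < hi"
  shows "countable {\<nu>::'i::wellorder. opt_deriv {f -` {..<hi}, f -` {lo<..}} \<nu> \<noteq> {}}"
proof -
  let ?D = "opt_deriv {f -` {..<hi}, f -` {lo<..}}"
  have "{\<nu>::'i. ?D \<nu> \<noteq> {}} \<subseteq> {\<nu>. \<exists>x\<in>?D \<nu>. removable {f -` {..<hi}, f -` {lo<..}} (?D \<nu>) x}"
  proof (rule subsetI, unfold mem_Collect_eq)
    fix \<nu> :: 'i assume "?D \<nu> \<noteq> {}"
    then show "\<exists>x\<in>?D \<nu>. removable {f -` {..<hi}, f -` {lo<..}} (?D \<nu>) x"
      by (rule baire1_removable_point[OF assms(1) closed_opt_deriv _ assms(2)])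
  qed
  then show ?thesis
    using countable_removable_levels by (rule countable_subset)
qed

section \<open>Questions and Bourgain ranks\<close>

definition answer_set :: "(cantor \<Rightarrow> real) \<Rightarrow> rat \<Rightarrow> rat \<Rightarrow> bool \<Rightarrow> cantor set" where
  "answer_set f p \<epsilon> b = {A. correct_answer (f A) p \<epsilon> b}"

lemma range_answer_set:
  "range (answer_set f p \<epsilon>) = {f -` {..<real_of_rat (p + \<epsilon>)}, f -` {real_of_rat (p - \<epsilon>)<..}}"
proof -
  have "range (answer_set f p \<epsilon>) = {answer_set f p \<epsilon> True, answer_set f p \<epsilon> False}"
    by (simp add: UNIV_bool insert_commute)
  then show ?thesis
    by (simp add: answer_set_def correct_answer_def vimage_def)
qed

lemma alpha_rank_eq_Least:
  "alpha_rank f p \<epsilon> = (LEAST \<nu>. opt_deriv (range (answer_set f p \<epsilon>)) \<nu> = {})"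
  by (simp add: alpha_rank_def range_answer_set)

lemma uncountable_UNIV_cord: "uncountable (UNIV :: cord set)"
proof
  assume "countable (UNIV :: cord set)"
  then have "countable (range Rep_cord)"
    by simp
  moreover have "range Rep_cord = UNIV"
    using type_definition.Rep_range[OF type_definition_cord] .
  ultimately show False
    using uncountable_UNIV_real by simp
qed

lemma countable_nonempty_opt_deriv_answer_set:
  assumes "baire1 f" "\<epsilon> > 0"
  shows "countable {\<nu>::'i::wellorder. opt_deriv (range (answer_set f p \<epsilon>)) \<nu> \<noteq> {}}"
proof -
  have "real_of_rat (p - \<epsilon>) < real_of_rat (p + \<epsilon>)"
    using assms(2) by (simp add: of_rat_less)
  then show ?thesis
    unfolding range_answer_set by (rule countable_nonempty_opt_deriv[OF assms(1)])
qed

lemma opt_deriv_alpha_rank: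
  assumes "baire1 f" "\<epsilon> > 0"
  shows "opt_deriv (range (answer_set f p \<epsilon>)) (alpha_rank f p \<epsilon>) = {}"
proof -
  have "\<exists>\<nu>::cord. opt_deriv (range (answer_set f p \<epsilon>)) \<nu> = {}"
    using countable_nonempty_opt_deriv_answer_set[OF assms] uncountable_UNIV_cord
    by (metis (mono_tags, lifting) UNIV_eq_I mem_Collect_eq)
  then show ?thesis
    unfolding alpha_rank_eq_Least by (rule LeastI_ex)
qed

lemma opt_deriv_below_alpha_rank:
  "\<nu> < alpha_rank f p \<epsilon> \<Longrightarrow> opt_deriv (range (answer_set f p \<epsilon>)) \<nu> \<noteq> {}"
  unfolding alpha_rank_eq_Least by (rule not_less_Least)

lemma countable_atMost_alpha_rank:
  assumes "baire1 f" "\<epsilon> > 0"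
  shows "countable {..alpha_rank f p \<epsilon>}"
proof -
  have "{..alpha_rank f p \<epsilon>} \<subseteq>
      insert (alpha_rank f p \<epsilon>) {\<nu>. opt_deriv (range (answer_set f p \<epsilon>)) \<nu> \<noteq> {}}"
    using opt_deriv_below_alpha_rank by (auto simp: order.order_iff_strict)
  then show ?thesis
    by (rule countable_subset) (simp add: countable_nonempty_opt_deriv_answer_set[OF assms])
qed

lemma ex_strict_upper_bound:
  fixes S :: "'a::linorder set"
  assumes "uncountable (UNIV :: 'a set)" "countable (\<Union>x\<in>S. {..x})"
  shows "\<exists>B. \<forall>x\<in>S. x < B"
proof -
  obtain B where "B \<notin> (\<Union>x\<in>S. {..x})"
    using assms by (metis UNIV_I countable_subset subsetI)
  then show ?thesis
    by (auto simp: not_le[symmetric])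
qed

lemma alpha_rank_le_bourgain_rank:
  assumes "baire1 f" "\<epsilon> > 0"
  shows "alpha_rank f p \<epsilon> \<le> bourgain_rank f"
proof -
  let ?S = "(\<lambda>(p, \<epsilon>). alpha_rank f p \<epsilon>) ` {(p, \<epsilon>). \<epsilon> > 0}"
  have "countable (\<Union>x\<in>?S. {..x})"
    using countable_atMost_alpha_rank[OF assms(1)] by (auto intro!: countable_UN)
  then obtain B where B: "\<forall>x\<in>?S. x < B"
    using ex_strict_upper_bound[OF uncountable_UNIV_cord] by blast
  have "alpha_rank f p \<epsilon> \<in> ?S" if "\<epsilon> > 0" for p \<epsilon>
    using that by (intro image_eqI[where x = "(p, \<epsilon>)"]) simp_all
  with B have "\<forall>p \<epsilon>. \<epsilon> > 0 \<longrightarrow> alpha_rank f p \<epsilon> \<le> B"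
    by (blast intro: less_imp_le)
  then have "\<forall>p \<epsilon>. \<epsilon> > 0 \<longrightarrow> alpha_rank f p \<epsilon> \<le> bourgain_rank f"
    unfolding bourgain_rank_def by (rule LeastI)
  with assms(2) show ?thesis
    by blast
qed

lemma less_bourgain_rank_imp_less_alpha_rank:
  assumes "\<mu> < bourgain_rank g"
  obtains q \<delta> where "\<delta> > 0" "\<mu> < alpha_rank g q \<delta>"
proof -
  have "\<not> (\<forall>q \<delta>. \<delta> > 0 \<longrightarrow> alpha_rank g q \<delta> \<le> \<mu>)"
    using assms Least_le[of "\<lambda>\<nu>. \<forall>q \<delta>. \<delta> > 0 \<longrightarrow> alpha_rank g q \<delta> \<le> \<nu>" \<mu>]
    unfolding bourgain_rank_def by (meson leD)
  then show ?thesis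
    using that by (meson not_le)
qed

lemma tt1_le_imp_rank_le:
  assumes "baire1 g" "tt1_le f g"
  shows "bourgain_rank f \<le> bourgain_rank g"
  unfolding bourgain_rank_def[of f]
proof (rule Least_le, intro allI impI)
  fix p \<epsilon> :: rat assume "\<epsilon> > 0"
  then obtain k q \<delta> r h where k: "continuous_on UNIV k" "\<delta> > 0"
    and red: "\<And>A b. k A \<in> answer_set g q \<delta> b \<Longrightarrow> A \<in> answer_set f p \<epsilon> (h (prefix A r) b)"
    using assms(2) unfolding tt1_le_def answer_set_def prefix_def[symmetric] by blast
  have "opt_deriv (range (answer_set f p \<epsilon>)) (alpha_rank g q \<delta>)
      \<subseteq> k -` opt_deriv (range (answer_set g q \<delta>)) (alpha_rank g q \<delta>)"
  proof (rule opt_deriv_pullback[OF k(1), where h = "\<lambda>A. h (prefix A r)"])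
    fix A :: cantor
    show "\<exists>U. open U \<and> A \<in> U \<and> (\<forall>B\<in>U. h (prefix B r) = h (prefix A r))"
      by (rule exI[of _ "cylinder (prefix A r)"]) (simp add: open_cylinder mem_cylinder_prefix)
  qed (rule red)
  also have "\<dots> = {}"
    by (simp add: opt_deriv_alpha_rank[OF assms(1) k(2)])
  finally have "alpha_rank f p \<epsilon> \<le> alpha_rank g q \<delta>"
    unfolding alpha_rank_eq_Least[of f] by (intro Least_le) blast
  also have "\<dots> \<le> bourgain_rank g"
    by (rule alpha_rank_le_bourgain_rank[OF assms(1) k(2)])
  finally show "alpha_rank f p \<epsilon> \<le> bourgain_rank g" .
qed

section \<open>Continuous maps on Cantor space\<close>

lemma prefix_eq_of_mem_cylinder:
  "y \<in> cylinder (prefix x n) \<Longrightarrow> m \<le> n \<Longrightarrow> prefix y m = prefix x m"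
  using cylinder_prefix_antimono mem_cylinder_prefix by blast

lemma Least_prefix_eq:
  assumes "\<exists>n. Q (prefix x n)" "y \<in> cylinder (prefix x (LEAST n. Q (prefix x n)))"
  shows "(LEAST n. Q (prefix y n)) = (LEAST n. Q (prefix x n))"
proof (rule Least_equality)
  let ?N = "LEAST n. Q (prefix x n)"
  show "Q (prefix y ?N)"
    using LeastI_ex[OF assms(1)] prefix_eq_of_mem_cylinder[OF assms(2) order_refl] by simp
  show "?N \<le> n" if "Q (prefix y n)" for n
  proof (rule ccontr)
    assume "\<not> ?N \<le> n"
    then have "n < ?N"
      by simp
    then have "prefix y n = prefix x n"
      using prefix_eq_of_mem_cylinder[OF assms(2)] by simp
    moreover have "\<not> Q (prefix x n)"
      using \<open>n < ?N\<close> by (rule not_less_Least)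
    ultimately show False
      using that by simp
  qed
qed

lemma continuous_on_glue_cylinders:
  fixes K :: "bool list \<Rightarrow> cantor \<Rightarrow> 'b::topological_space" and N :: "cantor \<Rightarrow> nat"
  assumes sub: "\<And>x. x \<in> S \<Longrightarrow> cylinder (prefix x (N x)) \<subseteq> S"
    and const: "\<And>x y. x \<in> S \<Longrightarrow> y \<in> cylinder (prefix x (N x)) \<Longrightarrow> N y = N x"
    and cont: "\<And>x. x \<in> S \<Longrightarrow> continuous_on (cylinder (prefix x (N x))) (K (prefix x (N x)))"
  shows "continuous_on S (\<lambda>x. K (prefix x (N x)) x)"
proof -
  have pieces: "continuous_on (cylinder (prefix x (N x))) (\<lambda>y. K (prefix y (N y)) y)" if "x \<in> S" for x
  proof (rule continuous_on_cong[THEN iffD1, OF refl _ cont[OF that]])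
    fix y assume "y \<in> cylinder (prefix x (N x))"
    then have "prefix y (N y) = prefix x (N x)"
      using const[OF that \<open>y \<in> cylinder (prefix x (N x))\<close>] \<open>y \<in> cylinder (prefix x (N x))\<close>
      by (simp add: mem_cylinder_prefix)
    then show "K (prefix x (N x)) y = K (prefix y (N y)) y"
      by simp
  qed
  have "continuous_on (\<Union>x\<in>S. cylinder (prefix x (N x))) (\<lambda>y. K (prefix y (N y)) y)"
    by (rule continuous_on_open_Union) (auto simp: open_cylinder pieces)
  moreover have "(\<Union>x\<in>S. cylinder (prefix x (N x))) = S"
    using sub self_mem_cylinder by blast
  ultimately show ?thesis
    by simp
qed

lemma continuous_on_cantorI:
  fixes k :: "'a::topological_space \<Rightarrow> cantor"
  assumes "\<And>x n. x \<in> W \<Longrightarrow> \<exists>V. open V \<and> x \<in> V \<and> (\<forall>y\<in>V \<inter> W. k y \<in> cylinder (prefix (k x) n))"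
  shows "continuous_on W k"
  unfolding continuous_on_topological
proof (intro ballI allI impI)
  fix x B assume "x \<in> W" "open B" "k x \<in> B"
  then obtain n where "cylinder (prefix (k x) n) \<subseteq> B"
    using cylinder_prefix_subset_open by blast
  with assms[OF \<open>x \<in> W\<close>, of n] show "\<exists>A. open A \<and> x \<in> A \<and> (\<forall>y\<in>W. y \<in> A \<longrightarrow> k y \<in> B)"
    by blast
qed

lemma continuous_on_extend_by_point:
  fixes k :: "cantor \<Rightarrow> cantor" and N :: "cantor \<Rightarrow> nat"
  assumes cont: "continuous_on S k"
    and outside: "\<And>x. x \<in> W - S \<Longrightarrow> k x = z"
    and inside: "\<And>y. y \<in> S \<Longrightarrow> cylinder (prefix y (N y)) \<subseteq> S \<and> k y \<in> cylinder (prefix z (N y))"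
  shows "continuous_on W k"
proof (rule continuous_on_cantorI)
  fix x j assume "x \<in> W"
  show "\<exists>V. open V \<and> x \<in> V \<and> (\<forall>y\<in>V \<inter> W. k y \<in> cylinder (prefix (k x) j))"
  proof (cases "x \<in> S")
    case True
    then obtain A where "open A" "x \<in> A" "\<forall>y\<in>S. y \<in> A \<longrightarrow> k y \<in> cylinder (prefix (k x) j)"
      using cont open_cylinder self_mem_cylinder unfolding continuous_on_topological by metis
    moreover have "cylinder (prefix x (N x)) \<subseteq> S"
      using inside[OF True] by blast
    ultimately show ?thesis
      using open_cylinder self_mem_cylinder by (intro exI[of _ "A \<inter> cylinder (prefix x (N x))"]) blast
  next
    case False
    have "k y \<in> cylinder (prefix (k x) j)" if y: "y \<in> cylinder (prefix x j) \<inter> W" for y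
    proof (cases "y \<in> S")
      case True
      have "j < N y"
      proof (rule ccontr)
        assume "\<not> j < N y"
        then have "x \<in> cylinder (prefix y (N y))"
          using y mem_cylinder_prefix_sym cylinder_prefix_antimono[of "N y" j y] by auto
        then show False
          using inside[OF True] \<open>x \<notin> S\<close> by blast
      qed
      then show ?thesis
        using inside[OF True] outside \<open>x \<in> W\<close> \<open>x \<notin> S\<close> cylinder_prefix_antimono[of j "N y" z]
        by auto
    qed (use y outside \<open>x \<in> W\<close> \<open>x \<notin> S\<close> in auto)
    then show ?thesis
      using open_cylinder self_mem_cylinder by blast
  qed
qed

lemma continuous_map_from_pieces:
  fixes R :: "cantor \<Rightarrow> cantor \<Rightarrow> bool" and Good :: "bool list \<Rightarrow> bool"
  assumes cover: "\<And>x. x \<in> S \<Longrightarrow> \<exists>n\<ge>m. Good (prefix x n)"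
    and Good_sub: "\<And>\<sigma>. Good \<sigma> \<Longrightarrow> cylinder \<sigma> \<subseteq> S"
    and piece: "\<And>\<sigma>. Good \<sigma> \<Longrightarrow> \<exists>\<kappa>. continuous_on (cylinder \<sigma>) \<kappa> \<and>
        \<kappa> ` cylinder \<sigma> \<subseteq> cylinder (prefix z (length \<sigma>)) \<and> (\<forall>x\<in>cylinder \<sigma>. R x (\<kappa> x))"
    and outside: "\<And>x. x \<in> W - S \<Longrightarrow> R x z"
  shows "\<exists>k. continuous_on W k \<and> k ` W \<subseteq> cylinder (prefix z m) \<and> (\<forall>x\<in>W. R x (k x))"
proof -
  \<comment> \<open>The minimal cylinders of length at least m satisfying Good partition S into clopen pieces.\<close>
  define Q where "Q \<sigma> \<longleftrightarrow> m \<le> length \<sigma> \<and> Good \<sigma>" for \<sigma>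
  define N where "N x = (LEAST n. Q (prefix x n))" for x
  have Q_ex: "\<exists>n. Q (prefix x n)" if "x \<in> S" for x
    using cover[OF that] unfolding Q_def by auto
  have N: "m \<le> N x" "Good (prefix x (N x))" if "x \<in> S" for x
    using LeastI_ex[OF Q_ex[OF that]] unfolding N_def Q_def by auto
  have N_const: "N y = N x" if "x \<in> S" "y \<in> cylinder (prefix x (N x))" for x y
    using Least_prefix_eq[OF Q_ex[OF that(1)] that(2)[unfolded N_def]] unfolding N_def .
  define is_piece where "is_piece \<sigma> \<kappa> \<longleftrightarrow> continuous_on (cylinder \<sigma>) \<kappa> \<and>
      \<kappa> ` cylinder \<sigma> \<subseteq> cylinder (prefix z (length \<sigma>)) \<and> (\<forall>x\<in>cylinder \<sigma>. R x (\<kappa> x))" for \<sigma> \<kappa>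
  define \<kappa> where "\<kappa> \<sigma> = (SOME \<kappa>. is_piece \<sigma> \<kappa>)" for \<sigma>
  have \<kappa>: "is_piece \<sigma> (\<kappa> \<sigma>)" if "Good \<sigma>" for \<sigma>
    unfolding \<kappa>_def using piece[OF that, folded is_piece_def] by (rule someI_ex)
  define k where "k x = (if x \<in> S then \<kappa> (prefix x (N x)) x else z)" for x
  have k_inside: "k x \<in> cylinder (prefix z (N x)) \<and> R x (k x)" if "x \<in> S" for x
    using \<kappa>[OF N(2)[OF that]] that unfolding is_piece_def k_def by auto
  have "continuous_on S (\<lambda>x. \<kappa> (prefix x (N x)) x)"
  proof (rule continuous_on_glue_cylinders)
    fix x assume "x \<in> S"
    show "cylinder (prefix x (N x)) \<subseteq> S"
      using Good_sub N(2)[OF \<open>x \<in> S\<close>] .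
    show "continuous_on (cylinder (prefix x (N x))) (\<kappa> (prefix x (N x)))"
      using \<kappa>[OF N(2)[OF \<open>x \<in> S\<close>]] unfolding is_piece_def by blast
  next
    fix x y assume "x \<in> S" "y \<in> cylinder (prefix x (N x))"
    then show "N y = N x"
      by (rule N_const)
  qed
  then have "continuous_on S k"
    by (rule continuous_on_cong[THEN iffD1, rotated 2]) (simp_all add: k_def)
  then have "continuous_on W k"
    by (rule continuous_on_extend_by_point[where N = N and z = z])
       (use Good_sub N k_inside in \<open>auto simp: k_def\<close>)
  moreover have "k ` W \<subseteq> cylinder (prefix z m)"
    using k_inside N(1) cylinder_prefix_antimono by (fastforce simp: k_def)
  moreover have "\<forall>x\<in>W. R x (k x)"
    using k_inside outside by (auto simp: k_def)
  ultimately show ?thesis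
    by blast
qed

section \<open>From ranks to reductions\<close>

lemma exists_continuous_reduction:
  fixes F G :: "bool \<Rightarrow> cantor set" and \<nu> :: "'i::wellorder"
  assumes "open W" "opt_deriv (range F) \<nu> \<inter> W \<subseteq> F e"
    and "z \<in> opt_deriv (range G) \<nu>" "z \<notin> G (\<not> e)"
  shows "\<exists>k. continuous_on W k \<and> k ` W \<subseteq> cylinder (prefix z m) \<and>
    (\<forall>x\<in>W. \<forall>b. k x \<in> G b \<longrightarrow> x \<in> F b)"
  using assms
proof (induction \<nu> arbitrary: W e z m rule: less_induct)
  case (less \<nu> W e z m)
  let ?P = "opt_deriv (range F) \<nu>"
  define Good where "Good \<sigma> \<longleftrightarrow>
      cylinder \<sigma> \<subseteq> W - ?P \<and> (\<exists>\<gamma><\<nu>. \<exists>e'. opt_deriv (range F) \<gamma> \<inter> cylinder \<sigma> \<subseteq> F e')" for \<sigma>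
  show ?case
  proof (rule continuous_map_from_pieces[where S = "W - ?P" and Good = Good])
    fix x assume x: "x \<in> W - ?P"
    then have "x \<notin> ?P"
      by blast
    then obtain \<gamma> U e' where \<gamma>: "\<gamma> < \<nu>" "open U" "x \<in> U" "opt_deriv (range F) \<gamma> \<inter> U \<subseteq> F e'"
      by (auto simp: not_in_opt_deriv_iff removable_def)
    have "open (U \<inter> (W - ?P))"
      using \<gamma>(2) less.prems(1) closed_opt_deriv by (intro open_Int open_Diff)
    then obtain n where n: "cylinder (prefix x n) \<subseteq> U \<inter> (W - ?P)"
      using cylinder_prefix_subset_open x \<gamma>(3) by blast
    then have "cylinder (prefix x (max m n)) \<subseteq> U \<inter> (W - ?P)"
      using cylinder_prefix_antimono[of n "max m n" x] by auto
    then have "Good (prefix x (max m n))"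
      unfolding Good_def using \<gamma>(1,4) by blast
    then show "\<exists>n\<ge>m. Good (prefix x n)"
      by (intro exI[of _ "max m n"]) simp
  next
    fix \<sigma> assume "Good \<sigma>"
    then obtain \<gamma> e' where \<gamma>: "\<gamma> < \<nu>" "opt_deriv (range F) \<gamma> \<inter> cylinder \<sigma> \<subseteq> F e'"
      unfolding Good_def by blast
    have "\<not> opt_deriv (range G) \<gamma> \<inter> cylinder (prefix z (length \<sigma>)) \<subseteq> G (\<not> e')"
    proof
      assume "opt_deriv (range G) \<gamma> \<inter> cylinder (prefix z (length \<sigma>)) \<subseteq> G (\<not> e')"
      then have "removable (range G) (opt_deriv (range G) \<gamma>) z"
        by (rule removableI[OF open_cylinder self_mem_cylinder rangeI])
      then show False
        using less.prems(3) \<gamma>(1) not_in_opt_deriv_iff by blast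
    qed
    then obtain w where w: "w \<in> opt_deriv (range G) \<gamma>" "w \<in> cylinder (prefix z (length \<sigma>))"
      "w \<notin> G (\<not> e')"
      by blast
    have "opt_deriv (range F) \<gamma> \<inter> cylinder \<sigma> \<subseteq> F e'"
      by (rule \<gamma>(2))
    from less.IH[OF \<gamma>(1) open_cylinder this w(1) w(3), of "length \<sigma>"]
    obtain \<kappa> where "continuous_on (cylinder \<sigma>) \<kappa>"
      "\<kappa> ` cylinder \<sigma> \<subseteq> cylinder (prefix w (length \<sigma>))"
      "\<forall>x\<in>cylinder \<sigma>. \<forall>b. \<kappa> x \<in> G b \<longrightarrow> x \<in> F b"
      by blast
    moreover have "cylinder (prefix w (length \<sigma>)) = cylinder (prefix z (length \<sigma>))"
      using cylinder_prefix_eq[OF w(2)] .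
    ultimately show "\<exists>\<kappa>. continuous_on (cylinder \<sigma>) \<kappa> \<and>
        \<kappa> ` cylinder \<sigma> \<subseteq> cylinder (prefix z (length \<sigma>)) \<and>
        (\<forall>x\<in>cylinder \<sigma>. \<forall>b. \<kappa> x \<in> G b \<longrightarrow> x \<in> F b)"
      by auto
  next
    fix x assume "x \<in> W - (W - ?P)"
    then have "x \<in> F e"
      using less.prems(2) by blast
    show "\<forall>b. z \<in> G b \<longrightarrow> x \<in> F b"
    proof (intro allI impI)
      fix b assume "z \<in> G b"
      with less.prems(4) have "b = e"
        by (cases b; cases e) auto
      with \<open>x \<in> F e\<close> show "x \<in> F b"
        by simp
    qed
  qed (auto simp: Good_def)
qed

lemma uniform_level_of_empty_opt_deriv:
  fixes \<C> :: "cantor set set"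
  assumes "opt_deriv \<C> \<alpha> = {}"
  obtains \<mu> r where "\<mu> < \<alpha>" "\<And>A. \<exists>C\<in>\<C>. opt_deriv \<C> \<mu> \<inter> cylinder (prefix A r) \<subseteq> C"
proof -
  have "\<exists>\<mu> n. \<mu> < \<alpha> \<and> (\<exists>C\<in>\<C>. opt_deriv \<C> \<mu> \<inter> cylinder (prefix x n) \<subseteq> C)" for x
  proof -
    have "x \<notin> opt_deriv \<C> \<alpha>"
      using assms by blast
    then show ?thesis
      unfolding not_in_opt_deriv_iff removable_cantor_iff by blast
  qed
  then obtain \<mu>x nx where level:
    "\<And>x. \<mu>x x < \<alpha> \<and> (\<exists>C\<in>\<C>. opt_deriv \<C> (\<mu>x x) \<inter> cylinder (prefix x (nx x)) \<subseteq> C)"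
    by metis
  obtain D where D: "finite D" "UNIV \<subseteq> (\<Union>x\<in>D. cylinder (prefix x (nx x)))"
  proof (rule compactE_image[OF compact_UNIV_cantor, of UNIV "\<lambda>x. cylinder (prefix x (nx x))"])
    show "open (cylinder (prefix x (nx x)))" for x
      by (rule open_cylinder)
    show "UNIV \<subseteq> (\<Union>x\<in>UNIV. cylinder (prefix x (nx x)))"
      using self_mem_cylinder by blast
  qed (use that in blast)
  then have "D \<noteq> {}"
    by auto
  define \<mu> where "\<mu> = Max (\<mu>x ` D)"
  define r where "r = Max (nx ` D)"
  have "\<mu> < \<alpha>"
    unfolding \<mu>_def using D(1) \<open>D \<noteq> {}\<close> level by (simp add: Max_less_iff)
  moreover have "\<exists>C\<in>\<C>. opt_deriv \<C> \<mu> \<inter> cylinder (prefix A r) \<subseteq> C" for A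
  proof -
    obtain x where x: "x \<in> D" "A \<in> cylinder (prefix x (nx x))"
      using D(2) by blast
    have "cylinder (prefix A r) \<subseteq> cylinder (prefix x (nx x))"
      using cylinder_prefix_antimono[of "nx x" r A] cylinder_prefix_eq[OF x(2)] D(1) x(1)
      unfolding r_def by simp
    moreover have "opt_deriv \<C> \<mu> \<subseteq> opt_deriv \<C> (\<mu>x x)"
      unfolding \<mu>_def using D(1) x(1) by (intro opt_deriv_antimono) simp
    ultimately show ?thesis
      using level[of x] by blast
  qed
  ultimately show ?thesis
    by (rule that)
qed

lemma sharpen_question:
  assumes "\<delta> > 0"
  obtains q' \<delta>' b0 where "\<delta>' > 0" "\<not> correct_answer t q' \<delta>' b0"
    "\<And>s b. correct_answer s q' \<delta>' b \<Longrightarrow> correct_answer s q \<delta> b"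
proof (cases "t \<le> real_of_rat (q - \<delta>)")
  case True
  then show ?thesis
    using that[of \<delta> q False] assms by (auto simp: correct_answer_def)
next
  case False
  moreover have "real_of_rat (q - \<delta>) < real_of_rat (q + \<delta>)"
    using assms by (simp add: of_rat_less)
  ultimately obtain c where c: "real_of_rat (q - \<delta>) < real_of_rat c" "real_of_rat c < t"
    "real_of_rat c < real_of_rat (q + \<delta>)"
    using of_rat_dense[of "real_of_rat (q - \<delta>)" "min t (real_of_rat (q + \<delta>))"] by auto
  define q' where "q' = (q - \<delta> + c) / 2"
  define \<delta>' where "\<delta>' = (c - (q - \<delta>)) / 2"
  have bounds: "q' + \<delta>' = c" "q' - \<delta>' = q - \<delta>"
    unfolding q'_def \<delta>'_def by (simp_all add: field_simps)
  have "\<delta>' > 0"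
    using c(1) unfolding \<delta>'_def by (simp add: of_rat_less)
  moreover have "\<not> correct_answer t q' \<delta>' True"
    using c(2) by (simp add: correct_answer_def bounds)
  moreover have "correct_answer s q \<delta> b" if "correct_answer s q' \<delta>' b" for s b
    using that c(3) by (auto simp: correct_answer_def bounds)
  ultimately show ?thesis
    by (rule that)
qed

lemma reduction_from_uniform_level:
  fixes F G :: "bool \<Rightarrow> cantor set" and \<mu> :: "'i::wellorder"
  assumes level: "\<And>A. \<exists>C\<in>range F. opt_deriv (range F) \<mu> \<inter> cylinder (prefix A r) \<subseteq> C"
    and y: "y \<in> opt_deriv (range G) \<mu>" "y \<notin> G b0"
  obtains k h where "continuous_on UNIV k" "\<And>A b. k A \<in> G b \<Longrightarrow> A \<in> F (h (prefix A r) b)"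
proof -
  define e where "e \<sigma> = (SOME e. opt_deriv (range F) \<mu> \<inter> cylinder \<sigma> \<subseteq> F e)" for \<sigma>
  have e: "opt_deriv (range F) \<mu> \<inter> cylinder (prefix A r) \<subseteq> F (e (prefix A r))" for A
  proof -
    from level[of A] have "\<exists>e. opt_deriv (range F) \<mu> \<inter> cylinder (prefix A r) \<subseteq> F e"
      by blast
    then show ?thesis
      unfolding e_def by (rule someI_ex)
  qed
  \<comment> \<open>Relabel the answers of G on each cylinder so that y avoids the wrong answer.\<close>
  define c where "c \<sigma> \<longleftrightarrow> b0 = (\<not> e \<sigma>)" for \<sigma>
  define G' where "G' \<sigma> b = G (b = c \<sigma>)" for \<sigma> b
  have range_G': "range (G' \<sigma>) = range G" for \<sigma>
    unfolding G'_def by (cases "c \<sigma>") (auto simp: UNIV_bool)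
  have y_avoids: "y \<notin> G' \<sigma> (\<not> e \<sigma>)" for \<sigma>
    using y(2) unfolding G'_def c_def by (cases b0; cases "e \<sigma>") auto
  define is_piece where "is_piece \<sigma> \<kappa> \<longleftrightarrow> continuous_on (cylinder \<sigma>) \<kappa> \<and>
      (\<forall>x\<in>cylinder \<sigma>. \<forall>b. \<kappa> x \<in> G' \<sigma> b \<longrightarrow> x \<in> F b)" for \<sigma> \<kappa>
  have "\<exists>\<kappa>. is_piece (prefix A r) \<kappa>" for A
  proof -
    have "y \<in> opt_deriv (range (G' (prefix A r))) \<mu>"
      using y(1) by (simp only: range_G')
    from exists_continuous_reduction[where m = 0, OF open_cylinder e[of A] this y_avoids]
    show ?thesis
      unfolding is_piece_def by blast
  qed
  then have K: "is_piece (prefix A r) (SOME \<kappa>. is_piece (prefix A r) \<kappa>)" for A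
    by (rule someI_ex)
  define k where "k A = (SOME \<kappa>. is_piece (prefix A r) \<kappa>) A" for A
  define h where "h \<sigma> b \<longleftrightarrow> b = c \<sigma>" for \<sigma> b
  show ?thesis
  proof (rule that)
    show "continuous_on UNIV k"
      unfolding k_def
      by (rule continuous_on_glue_cylinders[where N = "\<lambda>_. r"])
         (use K in \<open>auto simp: is_piece_def\<close>)
  next
    fix A b assume "k A \<in> G b"
    then have "k A \<in> G' (prefix A r) (h (prefix A r) b)"
      unfolding G'_def h_def by (cases "c (prefix A r)") auto
    then show "A \<in> F (h (prefix A r) b)"
      using K[of A] self_mem_cylinder unfolding is_piece_def k_def by blast
  qed
qed

lemma rank_le_imp_tt1_le:
  assumes "baire1 f" "baire1 g" "bourgain_rank f \<le> bourgain_rank g"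
  shows "tt1_le f g"
  unfolding tt1_le_def
proof (intro allI impI)
  fix p \<epsilon> :: rat assume "\<epsilon> > 0"
  obtain \<mu> r where \<mu>: "\<mu> < alpha_rank f p \<epsilon>"
    and level: "\<And>A. \<exists>C\<in>range (answer_set f p \<epsilon>).
      opt_deriv (range (answer_set f p \<epsilon>)) \<mu> \<inter> cylinder (prefix A r) \<subseteq> C"
    using uniform_level_of_empty_opt_deriv[OF opt_deriv_alpha_rank[OF assms(1) \<open>\<epsilon> > 0\<close>, where p = p]]
    by blast
  have "\<mu> < bourgain_rank g"
    using \<mu> alpha_rank_le_bourgain_rank[OF assms(1) \<open>\<epsilon> > 0\<close>, where p = p] assms(3)
    by (meson less_le_trans order_trans)
  then obtain q \<delta> where "\<delta> > 0" "\<mu> < alpha_rank g q \<delta>"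
    by (rule less_bourgain_rank_imp_less_alpha_rank)
  then obtain y where y: "y \<in> opt_deriv (range (answer_set g q \<delta>)) \<mu>"
    using opt_deriv_below_alpha_rank by blast
  obtain q' \<delta>' b0 where "\<delta>' > 0" "\<not> correct_answer (g y) q' \<delta>' b0"
    and refine: "\<And>s b. correct_answer s q' \<delta>' b \<Longrightarrow> correct_answer s q \<delta> b"
    using sharpen_question[OF \<open>\<delta> > 0\<close>] by metis
  have "y \<in> opt_deriv (range (answer_set g q' \<delta>')) \<mu>"
    using y opt_deriv_refine[of "answer_set g q' \<delta>'" "answer_set g q \<delta>"] refine
    by (auto simp: answer_set_def)
  moreover have "y \<notin> answer_set g q' \<delta>' b0"
    using \<open>\<not> correct_answer (g y) q' \<delta>' b0\<close> by (simp add: answer_set_def)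
  ultimately obtain k h where "continuous_on UNIV k"
    "\<And>A b. k A \<in> answer_set g q' \<delta>' b \<Longrightarrow> A \<in> answer_set f p \<epsilon> (h (prefix A r) b)"
    using reduction_from_uniform_level[OF level] by metis
  with \<open>\<delta>' > 0\<close> show "\<exists>k q \<delta> r h. continuous_on UNIV k \<and> \<delta> > 0 \<and>
      (\<forall>A b. correct_answer (g (k A)) q \<delta> b \<longrightarrow>
             correct_answer (f A) p \<epsilon> (h (map A [0..<r]) b))"
    unfolding answer_set_def prefix_def by blast
qed

theorem mainTheorem4:
  fixes f g :: "cantor \<Rightarrow> real"
  assumes "baire1 f" and "baire1 g"
  shows "tt1_le f g \<longleftrightarrow> bourgain_rank f \<le> bourgain_rank g"
  using tt1_le_imp_rank_le[OF assms(2)] rank_le_imp_tt1_le[OF assms] by blast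

end
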